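(* Let $(\mathcal{C},\mathbb{E},\mathfrak{s})$ be an extriangulated category with enough injective objects and let $\mathcal{I}$ be a special precovering ideal of $\mathcal{C}$. Then condition (J) holds for $\mathcal{I}$ if and only if $\mathcal{I}^{\perp_{\mathbb{E}}}$ is an object ideal; and in this case, for any object ideal $\mathcal{J}$ witnessing (J), $\mathcal{I}^{\perp_{\mathbb{E}}}=\langle\mathrm{Ob}(\mathcal{J})\diamond\mathrm{Ob}(\mathbb{E}\text{-}\mathrm{inj})\rangle$.
   Context: An extriangulated category $(\mathcal{C},\mathbb{E},\mathfrak{s})$ (Nakaoka–Palu): additive $\mathcal{C}$, biadditive $\mathbb{E}:\mathcal{C}^{\mathrm{op}}\times\mathcal{C}\to\mathrm{Ab}$, additive realization $\mathfrak{s}$ assigning to each $\delta\in\mathbb{E}(C,A)$ an equivalence class of sequences $A\to B\to C$, forming $\mathbb{E}$-triangles $A\to B\to C\overset{\delta}{\dashrightarrow}$, satisfying (ET1)–(ET4), (ET3)$^{\mathrm{op}}$, (ET4)$^{\mathrm{op}}$. Notation $a_\star\delta=\mathbb{E}(C,a)(\delta)$, $c^\star\delta=\mathbb{E}(c,A)(\delta)$; a morphism of $\mathbb{E}$-triangles is a commuting triple $(a,b,c)$ with $a_\star\delta=c^\star\delta'$. Enough injective objects: every $A$ admits an $\mathbb{E}$-triangle $A\to E\to C\overset{\delta}{\dashrightarrow}$ with $E$ injective ($\mathbb{E}(-,E)=0$). $\mathbb{E}\text{-}\mathrm{inj}$: morphisms $i:A\to Y$ with $i_\star\delta=0$ for all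 $\delta\in\mathbb{E}(C,A)$; so $\mathrm{Ob}(\mathbb{E}\text{-}\mathrm{inj})$ is the class of injective objects. Ideal: class of morphisms with zeros, closed under sums and two-sided composition. $\mathcal{I}^{\perp_{\mathbb{E}}}=\{g:A\to Y\mid m^\star g_\star\delta=0\ \forall m\in\mathcal{I},\,m:X\to C,\ \forall\delta\in\mathbb{E}(C,A)\}$. For a class $\mathcal{K}$ of morphisms, $\mathrm{Ob}(\mathcal{K})=\{A\mid\mathrm{id}_A\in\mathcal{K}\}$, $\langle\mathcal{K}\rangle$ is the smallest ideal containing $\mathcal{K}$ (for a class of objects, the smallest ideal containing their identities), and $\mathcal{K}$ is an object ideal if $\mathcal{K}=\langle\mathrm{Ob}(\mathcal{K})\rangle$; write $A\in\mathcal{K}$ for $A\in\mathrm{Ob}(\mathcal{K})$. For classes of objects $\mathcal{X},\mathcal{Y}$: $\mathcal{X}\diamond\mathcal{Y}$ is the class of $Z$ admitting an $\mathbb{E}$-triangle $X\to Z\to Y\overset{\delta}{\dashrightarrow}$ with $X\in\mathcal{X}$, $Y\in\mathcal{Y}$. An $\mathcal{I}$-precover of $C$: $i:X\to C$ in $\mathcal{I}$ through which every morphism $X'\to C$ in $\mathcal{I}$ factors. A special $\mathcal{I}$-precover of $C$: $i:X\to C$ in $\mathcal{I}$ with $\mathbb{E}$-triangles $A\to B\to C\overset{\delta}{\dashrightarrow}$, $A'\to X\xrightarrow{i}C\overset{\delta'}{\dashrightarrow}$ and a morphism $(j,b,\mathrm{id}_C)$ between them, $j\in\mathcal{I}^{\perp_{\mathbb{E}}}$;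 $\mathcal{I}$ is special precovering if every object has one. Condition (J) for an ideal $\mathcal{I}$: there exists an object ideal $\mathcal{J}\subseteq\mathcal{I}^{\perp_{\mathbb{E}}}$ such that every $C\in\mathcal{C}$ admits an $\mathcal{I}$-precover $i:X\to C$ together with an $\mathbb{E}$-triangle $A\to X\xrightarrow{i}C\overset{\delta}{\dashrightarrow}$ with $A\in\mathcal{J}$. *)

theory Defs
  imports Main
begin

text \<open>Ext C A is the abelian group E(C,A).
  push C a \<delta> is a_star \<delta> = E(C,a)(\<delta>) for \<delta> in E(C, dom a);
  pull A c \<delta> is c^star \<delta> = E(c,A)(\<delta>) for \<delta> in E(cod c, A);
  realizes C A \<delta> x y says that the sequence A -x-> B -y-> C belongs to the class s(\<delta>).\<close>

record ('o,'m,'e) extri_data =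
  objs :: "'o set"
  mors :: "'m set"
  dom_of :: "'m \<Rightarrow> 'o"
  cod_of :: "'m \<Rightarrow> 'o"
  cmp :: "'m \<Rightarrow> 'm \<Rightarrow> 'm"   (* cmp g f = g o f *)
  ide :: "'o \<Rightarrow> 'm"
  madd :: "'m \<Rightarrow> 'm \<Rightarrow> 'm"
  mneg :: "'m \<Rightarrow> 'm"
  mzero :: "'o \<Rightarrow> 'o \<Rightarrow> 'm"
  Ext :: "'o \<Rightarrow> 'o \<Rightarrow> 'e set"
  eadd :: "'o \<Rightarrow> 'o \<Rightarrow> 'e \<Rightarrow> 'e \<Rightarrow> 'e"
  eneg :: "'o \<Rightarrow> 'o \<Rightarrow> 'e \<Rightarrow> 'e"
  ezero :: "'o \<Rightarrow> 'o \<Rightarrow> 'e"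
  push :: "'o \<Rightarrow> 'm \<Rightarrow> 'e \<Rightarrow> 'e"
  pull :: "'o \<Rightarrow> 'm \<Rightarrow> 'e \<Rightarrow> 'e"
  realizes :: "'o \<Rightarrow> 'o \<Rightarrow> 'e \<Rightarrow> 'm \<Rightarrow> 'm \<Rightarrow> bool"

definition hom :: "('o,'m,'e) extri_data \<Rightarrow> 'o \<Rightarrow> 'o \<Rightarrow> 'm set" where
  "hom X A B = {f \<in> mors X. dom_of X f = A \<and> cod_of X f = B}"

definition is_category :: "('o,'m,'e) extri_data \<Rightarrow> bool" where
  "is_category X \<longleftrightarrow>
     (\<forall>f\<in>mors X. dom_of X f \<in> objs X \<and> cod_of X f \<in> objs X) \<and>
     (\<forall>A\<in>objs X. ide X A \<in> hom X A A) \<and>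
     (\<forall>f\<in>mors X. \<forall>g\<in>mors X. cod_of X f = dom_of X g \<longrightarrow>
        cmp X g f \<in> hom X (dom_of X f) (cod_of X g)) \<and>
     (\<forall>f\<in>mors X. cmp X f (ide X (dom_of X f)) = f \<and> cmp X (ide X (cod_of X f)) f = f) \<and>
     (\<forall>f\<in>mors X. \<forall>g\<in>mors X. \<forall>h\<in>mors X.
        cod_of X f = dom_of X g \<longrightarrow> cod_of X g = dom_of X h \<longrightarrow>
        cmp X h (cmp X g f) = cmp X (cmp X h g) f)"

definition is_preadditive :: "('o,'m,'e) extri_data \<Rightarrow> bool" where
  "is_preadditive X \<longleftrightarrow>
     (\<forall>A\<in>objs X. \<forall>B\<in>objs X.
        mzero X A B \<in> hom X A B \<and>
        (\<forall>f\<in>hom X A B. \<forall>g\<in>hom X A B. madd X f g \<in> hom X A B) \<and>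
        (\<forall>f\<in>hom X A B. mneg X f \<in> hom X A B) \<and>
        (\<forall>f\<in>hom X A B. \<forall>g\<in>hom X A B. \<forall>h\<in>hom X A B.
           madd X (madd X f g) h = madd X f (madd X g h)) \<and>
        (\<forall>f\<in>hom X A B. \<forall>g\<in>hom X A B. madd X f g = madd X g f) \<and>
        (\<forall>f\<in>hom X A B. madd X f (mzero X A B) = f) \<and>
        (\<forall>f\<in>hom X A B. madd X f (mneg X f) = mzero X A B)) \<and>
     (\<forall>A\<in>objs X. \<forall>B\<in>objs X. \<forall>C\<in>objs X.
        \<forall>f\<in>hom X A B. \<forall>g\<in>hom X A B. \<forall>h\<in>hom X B C.
          cmp X h (madd X f g) = madd X (cmp X h f) (cmp X h g)) \<and>
     (\<forall>A\<in>objs X. \<forall>B\<in>objs X. \<forall>C\<in>objs X.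
        \<forall>h\<in>hom X A B. \<forall>f\<in>hom X B C. \<forall>g\<in>hom X B C.
          cmp X (madd X f g) h = madd X (cmp X f h) (cmp X g h))"

definition is_zero_object :: "('o,'m,'e) extri_data \<Rightarrow> 'o \<Rightarrow> bool" where
  "is_zero_object X Z \<longleftrightarrow> Z \<in> objs X \<and>
     (\<forall>A\<in>objs X. (\<exists>!f. f \<in> hom X Z A) \<and> (\<exists>!f. f \<in> hom X A Z))"

definition biproduct ::
  "('o,'m,'e) extri_data \<Rightarrow> 'o \<Rightarrow> 'o \<Rightarrow> 'o \<Rightarrow> 'm \<Rightarrow> 'm \<Rightarrow> 'm \<Rightarrow> 'm \<Rightarrow> bool" where
  "biproduct X A B P i1 i2 p1 p2 \<longleftrightarrow> P \<in> objs X \<and>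
     i1 \<in> hom X A P \<and> i2 \<in> hom X B P \<and> p1 \<in> hom X P A \<and> p2 \<in> hom X P B \<and>
     cmp X p1 i1 = ide X A \<and> cmp X p2 i2 = ide X B \<and>
     cmp X p1 i2 = mzero X B A \<and> cmp X p2 i1 = mzero X A B \<and>
     madd X (cmp X i1 p1) (cmp X i2 p2) = ide X P"

definition is_additive :: "('o,'m,'e) extri_data \<Rightarrow> bool" where
  "is_additive X \<longleftrightarrow> is_category X \<and> is_preadditive X \<and>
     (\<exists>Z. is_zero_object X Z) \<and>
     (\<forall>A\<in>objs X. \<forall>B\<in>objs X. \<exists>P i1 i2 p1 p2. biproduct X A B P i1 i2 p1 p2)"

definition biadditive_E :: "('o,'m,'e) extri_data \<Rightarrow> bool" where
  "biadditive_E X \<longleftrightarrow>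
     (\<forall>C\<in>objs X. \<forall>A\<in>objs X.
        ezero X C A \<in> Ext X C A \<and>
        (\<forall>d\<in>Ext X C A. \<forall>e\<in>Ext X C A. eadd X C A d e \<in> Ext X C A) \<and>
        (\<forall>d\<in>Ext X C A. eneg X C A d \<in> Ext X C A) \<and>
        (\<forall>d\<in>Ext X C A. \<forall>e\<in>Ext X C A. \<forall>f\<in>Ext X C A.
           eadd X C A (eadd X C A d e) f = eadd X C A d (eadd X C A e f)) \<and>
        (\<forall>d\<in>Ext X C A. \<forall>e\<in>Ext X C A. eadd X C A d e = eadd X C A e d) \<and>
        (\<forall>d\<in>Ext X C A. eadd X C A d (ezero X C A) = d) \<and>
        (\<forall>d\<in>Ext X C A. eadd X C A d (eneg X C A d) = ezero X C A)) \<and>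
     (\<forall>C\<in>objs X. \<forall>A\<in>objs X. \<forall>A'\<in>objs X. \<forall>a\<in>hom X A A'.
        (\<forall>d\<in>Ext X C A. push X C a d \<in> Ext X C A') \<and>
        (\<forall>d\<in>Ext X C A. \<forall>e\<in>Ext X C A.
           push X C a (eadd X C A d e) = eadd X C A' (push X C a d) (push X C a e))) \<and>
     (\<forall>A\<in>objs X. \<forall>C\<in>objs X. \<forall>C'\<in>objs X. \<forall>c\<in>hom X C' C.
        (\<forall>d\<in>Ext X C A. pull X A c d \<in> Ext X C' A) \<and>
        (\<forall>d\<in>Ext X C A. \<forall>e\<in>Ext X C A.
           pull X A c (eadd X C A d e) = eadd X C' A (pull X A c d) (pull X A c e))) \<and>
     (\<forall>C\<in>objs X. \<forall>A\<in>objs X. \<forall>d\<in>Ext X C A.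
        push X C (ide X A) d = d \<and> pull X A (ide X C) d = d) \<and>
     (\<forall>C\<in>objs X. \<forall>A\<in>objs X. \<forall>A'\<in>objs X. \<forall>A''\<in>objs X.
        \<forall>a\<in>hom X A A'. \<forall>a'\<in>hom X A' A''. \<forall>d\<in>Ext X C A.
          push X C (cmp X a' a) d = push X C a' (push X C a d)) \<and>
     (\<forall>A\<in>objs X. \<forall>C\<in>objs X. \<forall>C'\<in>objs X. \<forall>C''\<in>objs X.
        \<forall>c\<in>hom X C' C. \<forall>c'\<in>hom X C'' C'. \<forall>d\<in>Ext X C A.
          pull X A (cmp X c c') d = pull X A c' (pull X A c d)) \<and>
     (\<forall>C\<in>objs X. \<forall>A\<in>objs X. \<forall>A'\<in>objs X.
        \<forall>a\<in>hom X A A'. \<forall>b\<in>hom X A A'. \<forall>d\<in>Ext X C A.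
          push X C (madd X a b) d = eadd X C A' (push X C a d) (push X C b d)) \<and>
     (\<forall>A\<in>objs X. \<forall>C\<in>objs X. \<forall>C'\<in>objs X.
        \<forall>c\<in>hom X C' C. \<forall>c2\<in>hom X C' C. \<forall>d\<in>Ext X C A.
          pull X A (madd X c c2) d = eadd X C' A (pull X A c d) (pull X A c2 d)) \<and>
     (\<forall>A\<in>objs X. \<forall>A'\<in>objs X. \<forall>C\<in>objs X. \<forall>C'\<in>objs X.
        \<forall>a\<in>hom X A A'. \<forall>c\<in>hom X C' C. \<forall>d\<in>Ext X C A.
          pull X A' c (push X C a d) = push X C' a (pull X A c d))"

definition is_iso :: "('o,'m,'e) extri_data \<Rightarrow> 'm \<Rightarrow> bool" where
  "is_iso X b \<longleftrightarrow> b \<in> mors X \<and>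
     (\<exists>b'\<in>hom X (cod_of X b) (dom_of X b).
        cmp X b' b = ide X (dom_of X b) \<and> cmp X b b' = ide X (cod_of X b))"

definition seq_equiv :: "('o,'m,'e) extri_data \<Rightarrow> 'm \<Rightarrow> 'm \<Rightarrow> 'm \<Rightarrow> 'm \<Rightarrow> bool" where
  "seq_equiv X x y x' y' \<longleftrightarrow>
     (\<exists>b\<in>hom X (cod_of X x) (cod_of X x'). is_iso X b \<and> cmp X b x = x' \<and> cmp X y' b = y)"

definition etri :: "('o,'m,'e) extri_data \<Rightarrow> 'o \<Rightarrow> 'o \<Rightarrow> 'o \<Rightarrow> 'm \<Rightarrow> 'm \<Rightarrow> 'e \<Rightarrow> bool" where
  "etri X A B C x y d \<longleftrightarrow> A \<in> objs X \<and> B \<in> objs X \<and> C \<in> objs X \<and>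
     x \<in> hom X A B \<and> y \<in> hom X B C \<and> d \<in> Ext X C A \<and> realizes X C A d x y"

definition is_realization :: "('o,'m,'e) extri_data \<Rightarrow> bool" where
  "is_realization X \<longleftrightarrow>
     (\<forall>C A d x y. realizes X C A d x y \<longrightarrow>
        C \<in> objs X \<and> A \<in> objs X \<and> d \<in> Ext X C A \<and>
        (\<exists>B\<in>objs X. x \<in> hom X A B \<and> y \<in> hom X B C)) \<and>
     (\<forall>C\<in>objs X. \<forall>A\<in>objs X. \<forall>d\<in>Ext X C A. \<exists>x y. realizes X C A d x y) \<and>
     (\<forall>C A d x y x' y'. realizes X C A d x y \<longrightarrow> realizes X C A d x' y' \<longrightarrow>
        seq_equiv X x y x' y') \<and>
     (\<forall>C A d x y x' y' B'. realizes X C A d x y \<longrightarrow> B' \<in> objs X \<longrightarrow>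
        x' \<in> hom X A B' \<longrightarrow> y' \<in> hom X B' C \<longrightarrow> seq_equiv X x y x' y' \<longrightarrow>
        realizes X C A d x' y') \<and>
     (\<forall>A B C A' B' C' x y x' y' d d' a c.
        etri X A B C x y d \<longrightarrow> etri X A' B' C' x' y' d' \<longrightarrow>
        a \<in> hom X A A' \<longrightarrow> c \<in> hom X C C' \<longrightarrow> push X C a d = pull X A' c d' \<longrightarrow>
        (\<exists>b\<in>hom X B B'. cmp X b x = cmp X x' a \<and> cmp X c y = cmp X y' b))"

definition additive_realization :: "('o,'m,'e) extri_data \<Rightarrow> bool" where
  "additive_realization X \<longleftrightarrow>
     (\<forall>A\<in>objs X. \<forall>C\<in>objs X. \<forall>P i1 i2 p1 p2. biproduct X A C P i1 i2 p1 p2 \<longrightarrow>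
        realizes X C A (ezero X C A) i1 p2) \<and>
     (\<forall>A B C A' B' C' x y x' y' d d' PA j1 j2 q1 q2 PB k1 k2 r1 r2 PC l1 l2 s1 s2.
        etri X A B C x y d \<longrightarrow> etri X A' B' C' x' y' d' \<longrightarrow>
        biproduct X A A' PA j1 j2 q1 q2 \<longrightarrow>
        biproduct X B B' PB k1 k2 r1 r2 \<longrightarrow>
        biproduct X C C' PC l1 l2 s1 s2 \<longrightarrow>
        realizes X PC PA
          (eadd X PC PA (push X PC j1 (pull X A s1 d)) (push X PC j2 (pull X A' s2 d')))
          (madd X (cmp X k1 (cmp X x q1)) (cmp X k2 (cmp X x' q2)))
          (madd X (cmp X l1 (cmp X y r1)) (cmp X l2 (cmp X y' r2))))"

definition ET3 :: "('o,'m,'e) extri_data \<Rightarrow> bool" where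
  "ET3 X \<longleftrightarrow>
     (\<forall>A B C A' B' C' x y x' y' d d' a b.
        etri X A B C x y d \<longrightarrow> etri X A' B' C' x' y' d' \<longrightarrow>
        a \<in> hom X A A' \<longrightarrow> b \<in> hom X B B' \<longrightarrow> cmp X b x = cmp X x' a \<longrightarrow>
        (\<exists>c\<in>hom X C C'. cmp X c y = cmp X y' b \<and> push X C a d = pull X A' c d'))"

definition ET3op :: "('o,'m,'e) extri_data \<Rightarrow> bool" where
  "ET3op X \<longleftrightarrow>
     (\<forall>A B C A' B' C' x y x' y' d d' b c.
        etri X A B C x y d \<longrightarrow> etri X A' B' C' x' y' d' \<longrightarrow>
        b \<in> hom X B B' \<longrightarrow> c \<in> hom X C C' \<longrightarrow> cmp X c y = cmp X y' b \<longrightarrow>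
        (\<exists>a\<in>hom X A A'. cmp X b x = cmp X x' a \<and> push X C a d = pull X A' c d'))"

definition ET4 :: "('o,'m,'e) extri_data \<Rightarrow> bool" where
  "ET4 X \<longleftrightarrow>
     (\<forall>A B C D F f f' g g' d d'.
        etri X A B D f f' d \<longrightarrow> etri X B C F g g' d' \<longrightarrow>
        (\<exists>E dd e h h' d''. E \<in> objs X \<and> dd \<in> hom X D E \<and> e \<in> hom X E F \<and>
           h \<in> hom X A C \<and> h' \<in> hom X C E \<and>
           etri X A C E h h' d'' \<and>
           h = cmp X g f \<and> cmp X dd f' = cmp X h' g \<and> cmp X e h' = g' \<and>
           etri X D E F dd e (push X F f' d') \<and>
           pull X A dd d'' = d \<and>
           push X E f d'' = pull X B e d'))"

definition ET4op :: "('o,'m,'e) extri_data \<Rightarrow> bool" where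
  "ET4op X \<longleftrightarrow>
     (\<forall>A B C D F f f' g g' d d'.
        etri X D A B f f' d \<longrightarrow> etri X F B C g g' d' \<longrightarrow>
        (\<exists>E dd e h h' d''. E \<in> objs X \<and> dd \<in> hom X D E \<and> e \<in> hom X E F \<and>
           h \<in> hom X E A \<and> h' \<in> hom X A C \<and>
           etri X E A C h h' d'' \<and>
           cmp X h dd = f \<and> cmp X f' h = cmp X g e \<and> cmp X g' f' = h' \<and>
           etri X D E F dd e (pull X D g d) \<and>
           push X C e d'' = d' \<and>
           push X B dd d = pull X E g' d''))"

definition extriangulated :: "('o,'m,'e) extri_data \<Rightarrow> bool" where
  "extriangulated X \<longleftrightarrow> is_additive X \<and> biadditive_E X \<and> is_realization X \<and>
     additive_realization X \<and> ET3 X \<and> ET3op X \<and> ET4 X \<and> ET4op X"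

definition injective_obj :: "('o,'m,'e) extri_data \<Rightarrow> 'o \<Rightarrow> bool" where
  "injective_obj X E \<longleftrightarrow> E \<in> objs X \<and> (\<forall>C\<in>objs X. Ext X C E = {ezero X C E})"

definition enough_injectives :: "('o,'m,'e) extri_data \<Rightarrow> bool" where
  "enough_injectives X \<longleftrightarrow>
     (\<forall>A\<in>objs X. \<exists>E C x y d. injective_obj X E \<and> etri X A E C x y d)"

definition E_inj :: "('o,'m,'e) extri_data \<Rightarrow> 'm set" where
  "E_inj X = {i \<in> mors X. \<forall>C\<in>objs X. \<forall>d\<in>Ext X C (dom_of X i).
      push X C i d = ezero X C (cod_of X i)}"

definition is_ideal :: "('o,'m,'e) extri_data \<Rightarrow> 'm set \<Rightarrow> bool" where
  "is_ideal X I \<longleftrightarrow> I \<subseteq> mors X \<and>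
     (\<forall>A\<in>objs X. \<forall>B\<in>objs X. mzero X A B \<in> I) \<and>
     (\<forall>f\<in>I. \<forall>g\<in>I. dom_of X f = dom_of X g \<longrightarrow> cod_of X f = cod_of X g \<longrightarrow> madd X f g \<in> I) \<and>
     (\<forall>f\<in>I. \<forall>g\<in>mors X. \<forall>h\<in>mors X. cod_of X h = dom_of X f \<longrightarrow> cod_of X f = dom_of X g \<longrightarrow>
        cmp X g (cmp X f h) \<in> I)"

definition perpE :: "('o,'m,'e) extri_data \<Rightarrow> 'm set \<Rightarrow> 'm set" where
  "perpE X I = {g \<in> mors X. \<forall>m\<in>I. \<forall>d\<in>Ext X (cod_of X m) (dom_of X g).
      pull X (cod_of X g) m (push X (cod_of X m) g d) = ezero X (dom_of X m) (cod_of X g)}"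

definition ObK :: "('o,'m,'e) extri_data \<Rightarrow> 'm set \<Rightarrow> 'o set" where
  "ObK X K = {A \<in> objs X. ide X A \<in> K}"

definition gen_ideal :: "('o,'m,'e) extri_data \<Rightarrow> 'm set \<Rightarrow> 'm set" where
  "gen_ideal X K = \<Inter>{I. is_ideal X I \<and> K \<subseteq> I}"

definition obj_gen_ideal :: "('o,'m,'e) extri_data \<Rightarrow> 'o set \<Rightarrow> 'm set" where
  "obj_gen_ideal X S = gen_ideal X (ide X ` S)"

definition object_ideal :: "('o,'m,'e) extri_data \<Rightarrow> 'm set \<Rightarrow> bool" where
  "object_ideal X K \<longleftrightarrow> K = obj_gen_ideal X (ObK X K)"

definition diamond :: "('o,'m,'e) extri_data \<Rightarrow> 'o set \<Rightarrow> 'o set \<Rightarrow> 'o set" where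
  "diamond X S T = {Z. \<exists>A Y x y d. A \<in> S \<and> Y \<in> T \<and> etri X A Z Y x y d}"

definition is_precover :: "('o,'m,'e) extri_data \<Rightarrow> 'm set \<Rightarrow> 'o \<Rightarrow> 'm \<Rightarrow> bool" where
  "is_precover X I C i \<longleftrightarrow> i \<in> I \<and> cod_of X i = C \<and>
     (\<forall>i'\<in>I. cod_of X i' = C \<longrightarrow> (\<exists>h\<in>hom X (dom_of X i') (dom_of X i). cmp X i h = i'))"

definition is_special_precover :: "('o,'m,'e) extri_data \<Rightarrow> 'm set \<Rightarrow> 'o \<Rightarrow> 'm \<Rightarrow> bool" where
  "is_special_precover X I C i \<longleftrightarrow> i \<in> I \<and> cod_of X i = C \<and>
     (\<exists>A B A' x y x' d d' j b.
        etri X A B C x y d \<and> etri X A' (dom_of X i) C x' i d' \<and>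
        j \<in> hom X A A' \<and> b \<in> hom X B (dom_of X i) \<and>
        cmp X b x = cmp X x' j \<and> cmp X i b = cmp X (ide X C) y \<and>
        push X C j d = pull X A' (ide X C) d' \<and>
        j \<in> perpE X I)"

definition special_precovering :: "('o,'m,'e) extri_data \<Rightarrow> 'm set \<Rightarrow> bool" where
  "special_precovering X I \<longleftrightarrow> (\<forall>C\<in>objs X. \<exists>i. is_special_precover X I C i)"

definition J_witness :: "('o,'m,'e) extri_data \<Rightarrow> 'm set \<Rightarrow> 'm set \<Rightarrow> bool" where
  "J_witness X I J \<longleftrightarrow> object_ideal X J \<and> J \<subseteq> perpE X I \<and>
     (\<forall>C\<in>objs X. \<exists>i A x d. is_precover X I C i \<and> etri X A (dom_of X i) C x i d \<and>
        A \<in> ObK X J)"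

definition condition_J :: "('o,'m,'e) extri_data \<Rightarrow> 'm set \<Rightarrow> bool" where
  "condition_J X I \<longleftrightarrow> (\<exists>J. J_witness X I J)"

end

theory Submission
  imports Defs
begin

text \<open>For \<open>J\<close> witnessing (J), the inclusion \<open>\<supseteq>\<close>: an object \<open>Z\<close> of
  \<open>Ob(J) \<diamond> Ob(E-inj)\<close> sits in an E-triangle \<open>A \<rightarrow> Z \<rightarrow> E\<close> with \<open>1\<^sub>A \<in> I\<^sup>\<perp>\<close> and
  \<open>E\<close> injective. As \<open>E(C,E) = 0\<close>, (ET4) shows that every \<open>\<delta> \<in> E(C,Z)\<close> is some \<open>x\<^sub>\<star>\<delta>'\<close>,
  so \<open>m\<^sup>\<star>\<delta> = x\<^sub>\<star>m\<^sup>\<star>\<delta>' = 0\<close> for \<open>m \<in> I\<close>.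

  The inclusion \<open>\<subseteq>\<close>: for \<open>g : A \<rightarrow> Y\<close> in \<open>I\<^sup>\<perp>\<close> take \<open>A \<rightarrow> E \<rightarrow> C\<close> (extension \<open>\<eta>\<close>) with
  \<open>E\<close> injective and an \<open>I\<close>-precover \<open>i\<close> of \<open>C\<close> with \<open>A\<^sub>0 \<rightarrow> X\<^sub>0 \<rightarrow> C\<close> (extension \<open>d\<close>),
  \<open>A\<^sub>0 \<in> J\<close>. Realize the extension \<open>(d, \<eta>)\<close> of \<open>C\<close> by \<open>A\<^sub>0 \<oplus> A\<close> as \<open>A\<^sub>0 \<oplus> A \<rightarrow> M \<rightarrow> C\<close>.
  The octahedra of this triangle with the two split triangles on \<open>A\<^sub>0 \<oplus> A\<close> show that
  \<open>M \<in> A\<^sub>0 \<diamond> E'\<close> with \<open>E' \<cong> E\<close>, and that \<open>g\<close> extends along \<open>A \<rightarrow> M\<close>, since the obstruction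
  \<open>g\<^sub>\<star>\<close> of the relevant extension is pulled back along a map factoring through \<open>i \<in> I\<close>.

  Conversely, an object ideal consists of the maps factoring through its objects, as these are
  closed under biproducts. Factoring the map \<open>j \<in> I\<^sup>\<perp>\<close> of a special precover through such an
  object \<open>K\<close> and realizing the pushed extension over \<open>K\<close> yields an \<open>I\<close>-precover whose
  cocone is \<open>K\<close>, i.e. \<open>I\<^sup>\<perp>\<close> itself witnesses (J).\<close>

definition factors_through :: "('o,'m,'e) extri_data \<Rightarrow> 'o set \<Rightarrow> 'm set" where
  "factors_through X S = {f \<in> mors X. \<exists>Z\<in>S. \<exists>u\<in>hom X (dom_of X f) Z. \<exists>v\<in>hom X Z (cod_of X f).
     f = cmp X v u}"

lemma gen_ideal_least: "is_ideal X K \<Longrightarrow> S \<subseteq> K \<Longrightarrow> gen_ideal X S \<subseteq> K"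
  unfolding gen_ideal_def by blast

locale extriangulated_category =
  fixes X :: "('o,'m,'e) extri_data"
  assumes extriangulated: "extriangulated X"
begin

lemma category: "is_category X"
  using extriangulated unfolding extriangulated_def is_additive_def by simp

lemma preadditive: "is_preadditive X"
  using extriangulated unfolding extriangulated_def is_additive_def by simp

lemma biadditive: "biadditive_E X"
  using extriangulated unfolding extriangulated_def by simp

lemma realization: "is_realization X"
  using extriangulated unfolding extriangulated_def by simp

lemma realization_additive: "additive_realization X"
  using extriangulated unfolding extriangulated_def by simp

lemma biproduct_exists: "A \<in> objs X \<Longrightarrow> B \<in> objs X \<Longrightarrow> \<exists>P i1 i2 p1 p2. biproduct X A B P i1 i2 p1 p2"
  using extriangulated unfolding extriangulated_def is_additive_def by blast

lemma zero_object_exists: "\<exists>Z. is_zero_object X Z"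
  using extriangulated unfolding extriangulated_def is_additive_def by blast

subsection \<open>Additive structure\<close>

lemma homD: "f \<in> hom X A B \<Longrightarrow> f \<in> mors X \<and> dom_of X f = A \<and> cod_of X f = B"
  by (simp add: hom_def)

lemma mor_in_hom: "f \<in> mors X \<Longrightarrow> f \<in> hom X (dom_of X f) (cod_of X f)"
  by (simp add: hom_def)

lemma hom_objs: "f \<in> hom X A B \<Longrightarrow> A \<in> objs X \<and> B \<in> objs X"
  using category unfolding is_category_def hom_def by auto

lemma ide_hom: "A \<in> objs X \<Longrightarrow> ide X A \<in> hom X A A"
  using category unfolding is_category_def by auto

lemma cmp_hom: "f \<in> hom X A B \<Longrightarrow> g \<in> hom X B C \<Longrightarrow> cmp X g f \<in> hom X A C"
  using category unfolding is_category_def hom_def by auto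

lemma cmp_ide_right: "f \<in> hom X A B \<Longrightarrow> cmp X f (ide X A) = f"
  using category unfolding is_category_def hom_def by auto

lemma cmp_ide_left: "f \<in> hom X A B \<Longrightarrow> cmp X (ide X B) f = f"
  using category unfolding is_category_def hom_def by auto

lemma cmp_assoc:
  "f \<in> hom X A B \<Longrightarrow> g \<in> hom X B C \<Longrightarrow> h \<in> hom X C D \<Longrightarrow>
   cmp X h (cmp X g f) = cmp X (cmp X h g) f"
  using category unfolding is_category_def hom_def by auto

lemma mzero_hom: "A \<in> objs X \<Longrightarrow> B \<in> objs X \<Longrightarrow> mzero X A B \<in> hom X A B"
  using preadditive unfolding is_preadditive_def by blast

lemma madd_hom: "f \<in> hom X A B \<Longrightarrow> g \<in> hom X A B \<Longrightarrow> madd X f g \<in> hom X A B"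
  using preadditive[unfolded is_preadditive_def] hom_objs[of f A B] by (elim conjE) blast

lemma mneg_hom: "f \<in> hom X A B \<Longrightarrow> mneg X f \<in> hom X A B"
  using preadditive[unfolded is_preadditive_def] hom_objs[of f A B] by (elim conjE) blast

lemma madd_assoc:
  "f \<in> hom X A B \<Longrightarrow> g \<in> hom X A B \<Longrightarrow> h \<in> hom X A B \<Longrightarrow>
   madd X (madd X f g) h = madd X f (madd X g h)"
  using preadditive[unfolded is_preadditive_def] hom_objs[of f A B] by (elim conjE) blast

lemma madd_comm: "f \<in> hom X A B \<Longrightarrow> g \<in> hom X A B \<Longrightarrow> madd X f g = madd X g f"
  using preadditive[unfolded is_preadditive_def] hom_objs[of f A B] by (elim conjE) blast

lemma madd_mzero: "f \<in> hom X A B \<Longrightarrow> madd X f (mzero X A B) = f"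
  using preadditive[unfolded is_preadditive_def] hom_objs[of f A B] by (elim conjE) blast

lemma madd_mneg: "f \<in> hom X A B \<Longrightarrow> madd X f (mneg X f) = mzero X A B"
  using preadditive[unfolded is_preadditive_def] hom_objs[of f A B] by (elim conjE) blast

lemma cmp_madd_left:
  assumes "f \<in> hom X A B" "g \<in> hom X A B" "h \<in> hom X B C"
  shows "cmp X h (madd X f g) = madd X (cmp X h f) (cmp X h g)"
  using preadditive[unfolded is_preadditive_def] hom_objs[OF assms(1)] hom_objs[OF assms(3)] assms
  by (elim conjE) blast

lemma cmp_madd_right:
  assumes "h \<in> hom X A B" "f \<in> hom X B C" "g \<in> hom X B C"
  shows "cmp X (madd X f g) h = madd X (cmp X f h) (cmp X g h)"
  using preadditive hom_objs[OF assms(1)] hom_objs[OF assms(2)] assms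
  unfolding is_preadditive_def by (auto 4 3)

lemma hom_idempotent_eq_mzero:
  assumes z: "z \<in> hom X A B" and "madd X z z = z"
  shows "z = mzero X A B"
  using assms madd_mneg[OF z] madd_mzero[OF z] madd_assoc[OF z z mneg_hom[OF z]] by metis

lemma cmp_mzero_left:
  assumes f: "f \<in> hom X A B" and C: "C \<in> objs X"
  shows "cmp X (mzero X B C) f = mzero X A C"
proof -
  have B: "B \<in> objs X" using hom_objs[OF f] by auto
  have z: "mzero X B C \<in> hom X B C" using mzero_hom[OF B C] .
  have zf: "cmp X (mzero X B C) f \<in> hom X A C" using cmp_hom[OF f z] .
  have "cmp X (mzero X B C) f = cmp X (madd X (mzero X B C) (mzero X B C)) f"
    using madd_mzero[OF z] by simp
  also have "\<dots> = madd X (cmp X (mzero X B C) f) (cmp X (mzero X B C) f)"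
    using cmp_madd_right[OF f z z] .
  finally show ?thesis using hom_idempotent_eq_mzero[OF zf] by simp
qed

lemma cmp_mzero_right:
  assumes h: "h \<in> hom X B C" and A: "A \<in> objs X"
  shows "cmp X h (mzero X A B) = mzero X A C"
proof -
  have B: "B \<in> objs X" using hom_objs[OF h] by auto
  have z: "mzero X A B \<in> hom X A B" using mzero_hom[OF A B] .
  have hz: "cmp X h (mzero X A B) \<in> hom X A C" using cmp_hom[OF z h] .
  have "cmp X h (mzero X A B) = cmp X h (madd X (mzero X A B) (mzero X A B))"
    using madd_mzero[OF z] by simp
  also have "\<dots> = madd X (cmp X h (mzero X A B)) (cmp X h (mzero X A B))"
    using cmp_madd_left[OF z z h] .
  finally show ?thesis using hom_idempotent_eq_mzero[OF hz] by simp
qed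

subsection \<open>The bifunctor E\<close>

lemma ezero_Ext: "C \<in> objs X \<Longrightarrow> A \<in> objs X \<Longrightarrow> ezero X C A \<in> Ext X C A"
  using biadditive unfolding biadditive_E_def by (elim conjE) blast

lemma eadd_Ext:
  "C \<in> objs X \<Longrightarrow> A \<in> objs X \<Longrightarrow> d \<in> Ext X C A \<Longrightarrow> e \<in> Ext X C A \<Longrightarrow> eadd X C A d e \<in> Ext X C A"
  using biadditive unfolding biadditive_E_def by (elim conjE) blast

lemma eneg_Ext: "C \<in> objs X \<Longrightarrow> A \<in> objs X \<Longrightarrow> d \<in> Ext X C A \<Longrightarrow> eneg X C A d \<in> Ext X C A"
  using biadditive unfolding biadditive_E_def by (elim conjE) blast

lemma eadd_assoc:
  "C \<in> objs X \<Longrightarrow> A \<in> objs X \<Longrightarrow> d \<in> Ext X C A \<Longrightarrow> e \<in> Ext X C A \<Longrightarrow> f \<in> Ext X C A \<Longrightarrow>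
   eadd X C A (eadd X C A d e) f = eadd X C A d (eadd X C A e f)"
  using biadditive unfolding biadditive_E_def by (elim conjE) blast

lemma eadd_comm:
  "C \<in> objs X \<Longrightarrow> A \<in> objs X \<Longrightarrow> d \<in> Ext X C A \<Longrightarrow> e \<in> Ext X C A \<Longrightarrow> eadd X C A d e = eadd X C A e d"
  using biadditive unfolding biadditive_E_def by (elim conjE) blast

lemma eadd_ezero: "C \<in> objs X \<Longrightarrow> A \<in> objs X \<Longrightarrow> d \<in> Ext X C A \<Longrightarrow> eadd X C A d (ezero X C A) = d"
  using biadditive unfolding biadditive_E_def by (elim conjE) blast

lemma eadd_eneg:
  "C \<in> objs X \<Longrightarrow> A \<in> objs X \<Longrightarrow> d \<in> Ext X C A \<Longrightarrow> eadd X C A d (eneg X C A d) = ezero X C A"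
  using biadditive unfolding biadditive_E_def by (elim conjE) blast

lemma Ext_idempotent_eq_ezero:
  assumes C: "C \<in> objs X" and A: "A \<in> objs X" and z: "z \<in> Ext X C A" and "eadd X C A z z = z"
  shows "z = ezero X C A"
  using assms eadd_eneg[OF C A z] eadd_ezero[OF C A z]
    eadd_assoc[OF C A z z eneg_Ext[OF C A z]]
  by metis

context
  fixes a A A' C
  assumes a: "a \<in> hom X A A'" and C: "C \<in> objs X"
begin

lemma push_Ext: "d \<in> Ext X C A \<Longrightarrow> push X C a d \<in> Ext X C A'"
  using biadditive hom_objs[OF a] a C unfolding biadditive_E_def by (elim conjE) blast

lemma push_eadd:
  "d \<in> Ext X C A \<Longrightarrow> e \<in> Ext X C A \<Longrightarrow>
   push X C a (eadd X C A d e) = eadd X C A' (push X C a d) (push X C a e)"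
  using biadditive hom_objs[OF a] a C unfolding biadditive_E_def by simp

lemma push_ezero: "push X C a (ezero X C A) = ezero X C A'"
proof -
  have A: "A \<in> objs X" and A': "A' \<in> objs X" using hom_objs[OF a] by auto
  have z: "ezero X C A \<in> Ext X C A" using ezero_Ext[OF C A] .
  have "push X C a (ezero X C A) = push X C a (eadd X C A (ezero X C A) (ezero X C A))"
    using eadd_ezero[OF C A z] by simp
  also have "\<dots> = eadd X C A' (push X C a (ezero X C A)) (push X C a (ezero X C A))"
    using push_eadd[OF z z] .
  finally show ?thesis using Ext_idempotent_eq_ezero[OF C A' push_Ext[OF z]] by simp
qed

end

context
  fixes c A C C'
  assumes c: "c \<in> hom X C' C" and A: "A \<in> objs X"
begin

lemma pull_Ext: "d \<in> Ext X C A \<Longrightarrow> pull X A c d \<in> Ext X C' A"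
  using biadditive hom_objs[OF c] c A unfolding biadditive_E_def by (elim conjE) (auto 4 3)

lemma pull_eadd:
  "d \<in> Ext X C A \<Longrightarrow> e \<in> Ext X C A \<Longrightarrow>
   pull X A c (eadd X C A d e) = eadd X C' A (pull X A c d) (pull X A c e)"
  using biadditive hom_objs[OF c] c A unfolding biadditive_E_def by simp

lemma pull_ezero: "pull X A c (ezero X C A) = ezero X C' A"
proof -
  have C: "C \<in> objs X" and C': "C' \<in> objs X" using hom_objs[OF c] by auto
  have z: "ezero X C A \<in> Ext X C A" using ezero_Ext[OF C A] .
  have "pull X A c (ezero X C A) = pull X A c (eadd X C A (ezero X C A) (ezero X C A))"
    using eadd_ezero[OF C A z] by simp
  also have "\<dots> = eadd X C' A (pull X A c (ezero X C A)) (pull X A c (ezero X C A))"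
    using pull_eadd[OF z z] .
  finally show ?thesis using Ext_idempotent_eq_ezero[OF C' A pull_Ext[OF z]] by simp
qed

end

lemma push_ide: "C \<in> objs X \<Longrightarrow> A \<in> objs X \<Longrightarrow> d \<in> Ext X C A \<Longrightarrow> push X C (ide X A) d = d"
  using biadditive unfolding biadditive_E_def by simp

lemma pull_ide: "C \<in> objs X \<Longrightarrow> A \<in> objs X \<Longrightarrow> d \<in> Ext X C A \<Longrightarrow> pull X A (ide X C) d = d"
  using biadditive unfolding biadditive_E_def by simp

lemma push_cmp:
  assumes "a \<in> hom X A A'" "a' \<in> hom X A' A''" "C \<in> objs X" "d \<in> Ext X C A"
  shows "push X C (cmp X a' a) d = push X C a' (push X C a d)"
proof -
  have "\<forall>C\<in>objs X. \<forall>A\<in>objs X. \<forall>A'\<in>objs X. \<forall>A''\<in>objs X.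
      \<forall>a\<in>hom X A A'. \<forall>a'\<in>hom X A' A''. \<forall>d\<in>Ext X C A.
        push X C (cmp X a' a) d = push X C a' (push X C a d)"
    using biadditive unfolding biadditive_E_def by (elim conjE) assumption
  then show ?thesis using hom_objs[OF assms(1)] hom_objs[OF assms(2)] assms by blast
qed

lemma pull_cmp:
  assumes "c \<in> hom X C' C" "c' \<in> hom X C'' C'" "A \<in> objs X" "d \<in> Ext X C A"
  shows "pull X A (cmp X c c') d = pull X A c' (pull X A c d)"
proof -
  have "\<forall>A\<in>objs X. \<forall>C\<in>objs X. \<forall>C'\<in>objs X. \<forall>C''\<in>objs X.
      \<forall>c\<in>hom X C' C. \<forall>c'\<in>hom X C'' C'. \<forall>d\<in>Ext X C A.
        pull X A (cmp X c c') d = pull X A c' (pull X A c d)"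
    using biadditive unfolding biadditive_E_def by (elim conjE) assumption
  then show ?thesis using hom_objs[OF assms(1)] hom_objs[OF assms(2)] assms by blast
qed

lemma push_madd:
  assumes "a \<in> hom X A A'" "b \<in> hom X A A'" "C \<in> objs X" "d \<in> Ext X C A"
  shows "push X C (madd X a b) d = eadd X C A' (push X C a d) (push X C b d)"
proof -
  have "\<forall>C\<in>objs X. \<forall>A\<in>objs X. \<forall>A'\<in>objs X.
      \<forall>a\<in>hom X A A'. \<forall>b\<in>hom X A A'. \<forall>d\<in>Ext X C A.
        push X C (madd X a b) d = eadd X C A' (push X C a d) (push X C b d)"
    using biadditive unfolding biadditive_E_def by (elim conjE) assumption
  then show ?thesis using hom_objs[OF assms(1)] assms by blast
qed

lemma pull_push:
  assumes "a \<in> hom X A A'" "c \<in> hom X C' C" "d \<in> Ext X C A"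
  shows "pull X A' c (push X C a d) = push X C' a (pull X A c d)"
  using biadditive hom_objs[OF assms(1)] hom_objs[OF assms(2)] assms
  unfolding biadditive_E_def by simp

lemma push_mzero:
  assumes A: "A \<in> objs X" and A': "A' \<in> objs X" and C: "C \<in> objs X" and d: "d \<in> Ext X C A"
  shows "push X C (mzero X A A') d = ezero X C A'"
proof -
  have z: "mzero X A A' \<in> hom X A A'" using mzero_hom[OF A A'] .
  have "push X C (mzero X A A') d = push X C (madd X (mzero X A A') (mzero X A A')) d"
    using madd_mzero[OF z] by simp
  also have "\<dots> = eadd X C A' (push X C (mzero X A A') d) (push X C (mzero X A A') d)"
    using push_madd[OF z z C d] .
  finally show ?thesis using Ext_idempotent_eq_ezero[OF C A' push_Ext[OF z C d]] by simp
qed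

subsection \<open>E-triangles\<close>

lemma etriD:
  "etri X A B C x y d \<Longrightarrow>
   A \<in> objs X \<and> B \<in> objs X \<and> C \<in> objs X \<and> x \<in> hom X A B \<and> y \<in> hom X B C \<and> d \<in> Ext X C A"
  unfolding etri_def by simp

lemma etri_exists:
  assumes "C \<in> objs X" "A \<in> objs X" "d \<in> Ext X C A"
  shows "\<exists>B x y. etri X A B C x y d"
proof -
  have "\<forall>C\<in>objs X. \<forall>A\<in>objs X. \<forall>d\<in>Ext X C A. \<exists>x y. realizes X C A d x y"
    using realization unfolding is_realization_def by (elim conjE) assumption
  then obtain x y where r: "realizes X C A d x y" using assms by blast
  have "\<forall>C A d x y. realizes X C A d x y \<longrightarrow>
      C \<in> objs X \<and> A \<in> objs X \<and> d \<in> Ext X C A \<and> (\<exists>B\<in>objs X. x \<in> hom X A B \<and> y \<in> hom X B C)"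
    using realization unfolding is_realization_def by (elim conjE) assumption
  then obtain B where "B \<in> objs X" "x \<in> hom X A B" "y \<in> hom X B C" using r by blast
  then show ?thesis using r assms unfolding etri_def by blast
qed

lemma etri_seq_equiv:
  assumes "etri X A B C x y d" "etri X A B' C x' y' d"
  shows "seq_equiv X x y x' y'"
proof -
  have "\<forall>C A d x y x' y'. realizes X C A d x y \<longrightarrow> realizes X C A d x' y' \<longrightarrow> seq_equiv X x y x' y'"
    using realization unfolding is_realization_def by (elim conjE) assumption
  then show ?thesis using assms unfolding etri_def by blast
qed

lemma etri_morphism:
  assumes "etri X A B C x y d" "etri X A' B' C' x' y' d'"
    "a \<in> hom X A A'" "c \<in> hom X C C'" "push X C a d = pull X A' c d'"
  shows "\<exists>b\<in>hom X B B'. cmp X b x = cmp X x' a \<and> cmp X c y = cmp X y' b"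
proof -
  have "\<forall>A B C A' B' C' x y x' y' d d' a c.
      etri X A B C x y d \<longrightarrow> etri X A' B' C' x' y' d' \<longrightarrow>
      a \<in> hom X A A' \<longrightarrow> c \<in> hom X C C' \<longrightarrow> push X C a d = pull X A' c d' \<longrightarrow>
      (\<exists>b\<in>hom X B B'. cmp X b x = cmp X x' a \<and> cmp X c y = cmp X y' b)"
    using realization unfolding is_realization_def by (elim conjE) assumption
  then show ?thesis using assms by blast
qed

lemma biproductD:
  "biproduct X A B P i1 i2 p1 p2 \<Longrightarrow> P \<in> objs X \<and>
     i1 \<in> hom X A P \<and> i2 \<in> hom X B P \<and> p1 \<in> hom X P A \<and> p2 \<in> hom X P B \<and>
     cmp X p1 i1 = ide X A \<and> cmp X p2 i2 = ide X B \<and>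
     cmp X p1 i2 = mzero X B A \<and> cmp X p2 i1 = mzero X A B \<and>
     madd X (cmp X i1 p1) (cmp X i2 p2) = ide X P"
  unfolding biproduct_def by simp

lemma biproduct_swap:
  assumes "biproduct X A B P i1 i2 p1 p2" shows "biproduct X B A P i2 i1 p2 p1"
proof -
  have "cmp X i1 p1 \<in> hom X P P" "cmp X i2 p2 \<in> hom X P P"
    using biproductD[OF assms] cmp_hom by auto
  then show ?thesis using assms madd_comm unfolding biproduct_def by metis
qed

lemma etri_split:
  assumes bp: "biproduct X A C P i1 i2 p1 p2" shows "etri X A P C i1 p2 (ezero X C A)"
proof -
  have A: "A \<in> objs X" and C: "C \<in> objs X" using biproductD[OF bp] hom_objs by blast+
  have "\<forall>A\<in>objs X. \<forall>C\<in>objs X. \<forall>P i1 i2 p1 p2. biproduct X A C P i1 i2 p1 p2 \<longrightarrow>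
      realizes X C A (ezero X C A) i1 p2"
    using realization_additive unfolding additive_realization_def by (elim conjE) assumption
  then have "realizes X C A (ezero X C A) i1 p2" using A C bp by blast
  then show ?thesis using A C biproductD[OF bp] ezero_Ext[OF C A] unfolding etri_def by blast
qed

text \<open>Both factorization lemmas compare the given E-triangle with a split one.\<close>

lemma lift_through_deflation:
  assumes t: "etri X K B C x y d" and c: "c \<in> hom X C' C"
    and z: "pull X K c d = ezero X C' K"
  shows "\<exists>h\<in>hom X C' B. cmp X y h = c"
proof -
  have K: "K \<in> objs X" and C': "C' \<in> objs X" using etriD[OF t] hom_objs[OF c] by auto
  obtain P i1 i2 p1 p2 where bp: "biproduct X K C' P i1 i2 p1 p2"
    using biproduct_exists[OF K C'] by blast
  note P = biproductD[OF bp]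
  have "push X C' (ide X K) (ezero X C' K) = pull X K c d"
    using z push_ide[OF C' K ezero_Ext[OF C' K]] by simp
  then obtain b where b: "b \<in> hom X P B" "cmp X c p2 = cmp X y b"
    using etri_morphism[OF etri_split[OF bp] t ide_hom[OF K] c] by blast
  have "cmp X y (cmp X b i2) = cmp X (cmp X y b) i2" using cmp_assoc P b etriD[OF t] by blast
  also have "\<dots> = cmp X c (cmp X p2 i2)" using b(2) cmp_assoc P c by metis
  also have "\<dots> = c" using P cmp_ide_right[OF c] by simp
  finally show ?thesis using cmp_hom P b(1) by blast
qed

lemma extend_along_inflation:
  assumes t: "etri X A B C x y d" and g: "g \<in> hom X A Y"
    and z: "push X C g d = ezero X C Y"
  shows "\<exists>l\<in>hom X B Y. cmp X l x = g"
proof -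
  have Y: "Y \<in> objs X" and C: "C \<in> objs X" using etriD[OF t] hom_objs[OF g] by auto
  obtain P i1 i2 p1 p2 where bp: "biproduct X Y C P i1 i2 p1 p2"
    using biproduct_exists[OF Y C] by blast
  note P = biproductD[OF bp]
  have "push X C g d = pull X Y (ide X C) (ezero X C Y)"
    using z pull_ide[OF C Y ezero_Ext[OF C Y]] by simp
  then obtain b where b: "b \<in> hom X B P" "cmp X b x = cmp X i1 g"
    using etri_morphism[OF t etri_split[OF bp] g ide_hom[OF C]] by blast
  have "cmp X (cmp X p1 b) x = cmp X p1 (cmp X b x)" using cmp_assoc P b etriD[OF t] by metis
  also have "\<dots> = cmp X (cmp X p1 i1) g" using b(2) cmp_assoc P g by metis
  also have "\<dots> = g" using P cmp_ide_left[OF g] by simp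
  finally show ?thesis using cmp_hom P b(1) by blast
qed

lemma ET4E:
  assumes "etri X A B D f f' d" "etri X B C F g g' d'"
  obtains E dd e h' d'' where "dd \<in> hom X D E" "e \<in> hom X E F" "h' \<in> hom X C E"
    "etri X A C E (cmp X g f) h' d''" "cmp X dd f' = cmp X h' g" "cmp X e h' = g'"
    "etri X D E F dd e (push X F f' d')" "pull X A dd d'' = d" "push X E f d'' = pull X B e d'"
proof -
  have "ET4 X" using extriangulated unfolding extriangulated_def by simp
  from this[unfolded ET4_def, rule_format, OF assms] show thesis using that by blast
qed

lemma push_exact_at_middle:
  assumes t: "etri X A Z E x y \<eta>" and C: "C \<in> objs X" and \<delta>: "\<delta> \<in> Ext X C Z"
    and z: "push X C y \<delta> = ezero X C E"
  shows "\<exists>\<delta>'\<in>Ext X C A. \<delta> = push X C x \<delta>'"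
proof -
  have A: "A \<in> objs X" and Z: "Z \<in> objs X" and E: "E \<in> objs X" and x: "x \<in> hom X A Z"
    using etriD[OF t] by auto
  obtain W u v where t2: "etri X Z W C u v \<delta>" using etri_exists[OF C Z \<delta>] by blast
  obtain E' dd e h' d'' where e: "e \<in> hom X E' C" and t3: "etri X A W E' (cmp X u x) h' d''"
      and t4: "etri X E E' C dd e (push X C y \<delta>)" and d'': "push X E' x d'' = pull X Z e \<delta>"
    using ET4E[OF t t2] by metis
  have d''E: "d'' \<in> Ext X E' A" using etriD[OF t3] by blast
  have "pull X E (ide X C) (push X C y \<delta>) = ezero X C E"
    using z pull_ide[OF C E ezero_Ext[OF C E]] by simp
  then obtain s where s: "s \<in> hom X C E'" and es: "cmp X e s = ide X C"
    using lift_through_deflation[OF t4 ide_hom[OF C]] by blast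
  have "\<delta> = pull X Z (ide X C) \<delta>" using pull_ide[OF C Z \<delta>] by simp
  also have "\<dots> = pull X Z s (pull X Z e \<delta>)" using pull_cmp[OF e s Z \<delta>] es by simp
  also have "\<dots> = push X C x (pull X A s d'')" using pull_push[OF x s d''E] d'' by simp
  finally show ?thesis using pull_Ext[OF s A d''E] by blast
qed

lemma Ext_biproduct_exists:
  assumes bp: "biproduct X A0 A P i1 i2 p1 p2" and C: "C \<in> objs X"
    and d: "d \<in> Ext X C A0" and \<eta>: "\<eta> \<in> Ext X C A"
  shows "\<exists>d2\<in>Ext X C P. push X C p1 d2 = d \<and> push X C p2 d2 = \<eta>"
proof -
  have A0: "A0 \<in> objs X" and A: "A \<in> objs X" and P: "P \<in> objs X"
    and i1: "i1 \<in> hom X A0 P" and i2: "i2 \<in> hom X A P"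
    and p1: "p1 \<in> hom X P A0" and p2: "p2 \<in> hom X P A"
    using biproductD[OF bp] hom_objs by blast+
  have p1i1: "cmp X p1 i1 = ide X A0" and p2i2: "cmp X p2 i2 = ide X A"
    and p1i2: "cmp X p1 i2 = mzero X A A0" and p2i1: "cmp X p2 i1 = mzero X A0 A"
    using biproductD[OF bp] by auto
  define d2 where "d2 = eadd X C P (push X C i1 d) (push X C i2 \<eta>)"
  have e1: "push X C i1 d \<in> Ext X C P" and e2: "push X C i2 \<eta> \<in> Ext X C P"
    using push_Ext i1 i2 C d \<eta> by blast+
  have "push X C p1 d2 = eadd X C A0 (push X C p1 (push X C i1 d)) (push X C p1 (push X C i2 \<eta>))"
    unfolding d2_def using push_eadd[OF p1 C e1 e2] .
  also have "\<dots> = eadd X C A0 d (ezero X C A0)"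
    using push_cmp[OF i1 p1 C d] push_cmp[OF i2 p1 C \<eta>] p1i1 p1i2
      push_ide[OF C A0 d] push_mzero[OF A A0 C \<eta>] by simp
  finally have 1: "push X C p1 d2 = d" using eadd_ezero[OF C A0 d] by simp
  have "push X C p2 d2 = eadd X C A (push X C p2 (push X C i1 d)) (push X C p2 (push X C i2 \<eta>))"
    unfolding d2_def using push_eadd[OF p2 C e1 e2] .
  also have "\<dots> = eadd X C A (ezero X C A) \<eta>"
    using push_cmp[OF i1 p2 C d] push_cmp[OF i2 p2 C \<eta>] p2i2 p2i1
      push_ide[OF C A \<eta>] push_mzero[OF A0 A C d] by simp
  finally have 2: "push X C p2 d2 = \<eta>"
    using eadd_ezero[OF C A \<eta>] eadd_comm[OF C A \<eta> ezero_Ext[OF C A]] by simp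
  have "d2 \<in> Ext X C P" unfolding d2_def using eadd_Ext[OF C P e1 e2] .
  then show ?thesis using 1 2 by blast
qed

subsection \<open>Injective objects\<close>

lemma injective_obj_iff_ObK_E_inj: "injective_obj X E \<longleftrightarrow> E \<in> ObK X (E_inj X)"
proof
  assume inj: "injective_obj X E"
  then have E: "E \<in> objs X" unfolding injective_obj_def by blast
  have "dom_of X (ide X E) = E" "cod_of X (ide X E) = E" "ide X E \<in> mors X"
    using homD[OF ide_hom[OF E]] by auto
  moreover have "push X C (ide X E) d = ezero X C E" if "C \<in> objs X" "d \<in> Ext X C E" for C d
    using inj that push_ide[OF that(1) E] unfolding injective_obj_def by auto
  ultimately show "E \<in> ObK X (E_inj X)" using E unfolding ObK_def E_inj_def by auto
next
  assume "E \<in> ObK X (E_inj X)"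
  then have E: "E \<in> objs X" and i: "ide X E \<in> E_inj X" unfolding ObK_def by auto
  have "dom_of X (ide X E) = E" "cod_of X (ide X E) = E" using homD[OF ide_hom[OF E]] by auto
  then have "d = ezero X C E" if "C \<in> objs X" "d \<in> Ext X C E" for C d
    using i that push_ide[OF that(1) E that(2)] unfolding E_inj_def by auto
  then show "injective_obj X E" using E ezero_Ext[OF _ E] unfolding injective_obj_def by blast
qed

lemma injective_obj_iso:
  assumes inj: "injective_obj X E" and b: "b \<in> hom X E E'" and iso: "is_iso X b"
  shows "injective_obj X E'"
proof -
  have E': "E' \<in> objs X" using hom_objs[OF b] by blast
  obtain b' where b': "b' \<in> hom X E' E" and bb': "cmp X b b' = ide X E'"
    using iso homD[OF b] unfolding is_iso_def by auto
  have "\<delta> = ezero X C E'" if C: "C \<in> objs X" and \<delta>: "\<delta> \<in> Ext X C E'" for C \<delta>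
  proof -
    have "push X C b' \<delta> = ezero X C E" using inj push_Ext[OF b' C \<delta>] C unfolding injective_obj_def by blast
    then have "push X C b (push X C b' \<delta>) = ezero X C E'" using push_ezero[OF b C] by simp
    then show ?thesis using push_cmp[OF b' b C \<delta>] bb' push_ide[OF C E' \<delta>] by simp
  qed
  then show ?thesis using E' ezero_Ext[OF _ E'] unfolding injective_obj_def by blast
qed

lemma etri_injective_middle:
  assumes "etri X A E C x y \<eta>" "etri X A E' C x' y' \<eta>" "injective_obj X E"
  shows "injective_obj X E'"
proof -
  obtain b where "b \<in> hom X (cod_of X x) (cod_of X x')" "is_iso X b"
    using etri_seq_equiv[OF assms(1,2)] unfolding seq_equiv_def by blast
  moreover have "cod_of X x = E" "cod_of X x' = E'"
    using etriD[OF assms(1)] etriD[OF assms(2)] homD by blast+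
  ultimately show ?thesis using injective_obj_iso assms(3) by simp
qed

lemma middle_term_in_diamond:
  assumes bp: "biproduct X A0 A P i1 i2 p1 p2" and t: "etri X P M C h v d2"
    and t1: "etri X A E C x y (push X C p2 d2)" and inj: "injective_obj X E"
  shows "\<exists>E2 x' y' d'. injective_obj X E2 \<and> etri X A0 M E2 x' y' d'"
proof -
  obtain E2 dd e h' d'' where "etri X A0 M E2 (cmp X h i1) h' d''"
      and "etri X A E2 C dd e (push X C p2 d2)"
    using ET4E[OF etri_split[OF bp] t] by metis
  then show ?thesis using etri_injective_middle[OF t1 _ inj] by blast
qed

subsection \<open>Ideals and object ideals\<close>

lemma ideal_cmp:
  assumes K: "is_ideal X K" and "f \<in> K" "f \<in> hom X A B" "h \<in> hom X A' A" "g \<in> hom X B B'"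
  shows "cmp X g (cmp X f h) \<in> K"
proof -
  have "g \<in> mors X" "h \<in> mors X" "cod_of X h = dom_of X f" "cod_of X f = dom_of X g"
    using homD assms(3-5) by auto
  then show ?thesis using K \<open>f \<in> K\<close> unfolding is_ideal_def by blast
qed

lemma ideal_cmp_right:
  assumes "is_ideal X K" "f \<in> K" "f \<in> hom X A B" "h \<in> hom X A' A"
  shows "cmp X f h \<in> K"
proof -
  have "B \<in> objs X" using hom_objs assms(3) by blast
  then show ?thesis
    using ideal_cmp[OF assms ide_hom] cmp_ide_left[OF cmp_hom[OF assms(4,3)]] by simp
qed

lemma cmp_through_ObK_in_ideal:
  assumes K: "is_ideal X K" and Z: "Z \<in> ObK X K" and u: "u \<in> hom X A Z" and v: "v \<in> hom X Z B"
  shows "cmp X v u \<in> K"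
proof -
  have "Z \<in> objs X" "ide X Z \<in> K" using Z unfolding ObK_def by auto
  then show ?thesis using ideal_cmp[OF K _ ide_hom u v] cmp_ide_left[OF u] by simp
qed

lemma cmp_through_in_obj_gen_ideal:
  assumes "Z \<in> S" "u \<in> hom X A Z" "v \<in> hom X Z B"
  shows "cmp X v u \<in> obj_gen_ideal X S"
proof -
  have "Z \<in> objs X" using hom_objs assms(2) by blast
  then have "cmp X v u \<in> K" if "is_ideal X K" "ide X ` S \<subseteq> K" for K
    using cmp_through_ObK_in_ideal[OF that(1) _ assms(2,3)] that(2) assms(1)
    unfolding ObK_def by blast
  then show ?thesis unfolding obj_gen_ideal_def gen_ideal_def by blast
qed

lemma object_ideal_obj_gen_ideal:
  assumes "S \<subseteq> objs X" shows "object_ideal X (obj_gen_ideal X S)"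
proof -
  let ?G = "obj_gen_ideal X S"
  have "S \<subseteq> ObK X ?G"
    using assms unfolding ObK_def obj_gen_ideal_def gen_ideal_def by blast
  then have "?G \<subseteq> obj_gen_ideal X (ObK X ?G)"
    unfolding obj_gen_ideal_def gen_ideal_def by blast
  moreover have "obj_gen_ideal X (ObK X ?G) \<subseteq> ?G"
    unfolding obj_gen_ideal_def gen_ideal_def ObK_def by blast
  ultimately show ?thesis unfolding object_ideal_def by blast
qed

lemma zero_object_in_ObK:
  assumes K: "is_ideal X K" and Z: "is_zero_object X Z"
  shows "Z \<in> ObK X K"
proof -
  have Zo: "Z \<in> objs X" using Z unfolding is_zero_object_def by blast
  have "ide X Z = mzero X Z Z"
    using Z ide_hom[OF Zo] mzero_hom[OF Zo Zo] unfolding is_zero_object_def by blast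
  then show ?thesis using K Zo unfolding is_ideal_def ObK_def by simp
qed

lemma biproduct_in_ObK:
  assumes K: "is_ideal X K" and K1: "K1 \<in> ObK X K" and K2: "K2 \<in> ObK X K"
    and bp: "biproduct X K1 K2 P q1 q2 r1 r2"
  shows "P \<in> ObK X K"
proof -
  note B = biproductD[OF bp]
  have "cmp X q1 r1 \<in> K" "cmp X q2 r2 \<in> K"
    using cmp_through_ObK_in_ideal[OF K] K1 K2 B by blast+
  moreover have "cmp X q1 r1 \<in> hom X P P" "cmp X q2 r2 \<in> hom X P P" using cmp_hom B by blast+
  ultimately have "madd X (cmp X q1 r1) (cmp X q2 r2) \<in> K"
    using K homD unfolding is_ideal_def by (metis (no_types, lifting))
  then show ?thesis using B unfolding ObK_def by simp
qed

lemma factors_throughI: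
  assumes "Z \<in> S" "u \<in> hom X A Z" "v \<in> hom X Z B"
  shows "cmp X v u \<in> factors_through X S"
proof -
  have "cmp X v u \<in> hom X A B" using cmp_hom assms(2,3) .
  then show ?thesis using assms homD unfolding factors_through_def by blast
qed

lemma factors_throughE:
  assumes "f \<in> factors_through X S" "f \<in> hom X A B"
  obtains Z u v where "Z \<in> S" "u \<in> hom X A Z" "v \<in> hom X Z B" "f = cmp X v u"
  using assms homD unfolding factors_through_def by blast

lemma biproduct_copairing:
  assumes bp: "biproduct X K1 K2 K q1 q2 r1 r2" and v1: "v1 \<in> hom X K1 B" and v2: "v2 \<in> hom X K2 B"
  shows "\<exists>v\<in>hom X K B. cmp X v q1 = v1 \<and> cmp X v q2 = v2"
proof -
  have q1: "q1 \<in> hom X K1 K" and q2: "q2 \<in> hom X K2 K"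
    and r1: "r1 \<in> hom X K K1" and r2: "r2 \<in> hom X K K2"
    and r1q1: "cmp X r1 q1 = ide X K1" and r2q2: "cmp X r2 q2 = ide X K2"
    and r1q2: "cmp X r1 q2 = mzero X K2 K1" and r2q1: "cmp X r2 q1 = mzero X K1 K2"
    using biproductD[OF bp] by auto
  have K1: "K1 \<in> objs X" and K2: "K2 \<in> objs X" and B: "B \<in> objs X"
    using hom_objs[OF v1] hom_objs[OF v2] by auto
  define v where "v = madd X (cmp X v1 r1) (cmp X v2 r2)"
  have vr1: "cmp X v1 r1 \<in> hom X K B" and vr2: "cmp X v2 r2 \<in> hom X K B"
    using cmp_hom r1 v1 r2 v2 by blast+
  have "cmp X v q1 = madd X (cmp X (cmp X v1 r1) q1) (cmp X (cmp X v2 r2) q1)"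
    unfolding v_def using cmp_madd_right[OF q1 vr1 vr2] .
  also have "\<dots> = madd X v1 (mzero X K1 B)"
    using cmp_assoc[OF q1 r1 v1] cmp_assoc[OF q1 r2 v2] r1q1 r2q1 cmp_ide_right[OF v1]
      cmp_mzero_right[OF v2 K1] by simp
  finally have "cmp X v q1 = v1" using madd_mzero[OF v1] by simp
  moreover have "cmp X v q2 = madd X (cmp X (cmp X v1 r1) q2) (cmp X (cmp X v2 r2) q2)"
    unfolding v_def using cmp_madd_right[OF q2 vr1 vr2] .
  moreover have "\<dots> = madd X (mzero X K2 B) v2"
    using cmp_assoc[OF q2 r1 v1] cmp_assoc[OF q2 r2 v2] r2q2 r1q2 cmp_ide_right[OF v2]
      cmp_mzero_right[OF v1 K2] by simp
  moreover have "\<dots> = v2" using madd_mzero[OF v2] madd_comm[OF v2 mzero_hom[OF K2 B]] by simp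
  moreover have "v \<in> hom X K B" unfolding v_def using madd_hom[OF vr1 vr2] .
  ultimately show ?thesis by auto
qed

lemma madd_in_factors_through:
  assumes S: "S \<subseteq> objs X"
    and closed: "\<forall>K1\<in>S. \<forall>K2\<in>S. \<forall>P q1 q2 r1 r2. biproduct X K1 K2 P q1 q2 r1 r2 \<longrightarrow> P \<in> S"
    and f: "f \<in> factors_through X S" "f \<in> hom X A B"
    and g: "g \<in> factors_through X S" "g \<in> hom X A B"
  shows "madd X f g \<in> factors_through X S"
proof -
  obtain K1 u1 v1 where K1: "K1 \<in> S" and u1: "u1 \<in> hom X A K1" and v1: "v1 \<in> hom X K1 B"
    and f_eq: "f = cmp X v1 u1" using factors_throughE[OF f] .
  obtain K2 u2 v2 where K2: "K2 \<in> S" and u2: "u2 \<in> hom X A K2" and v2: "v2 \<in> hom X K2 B"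
    and g_eq: "g = cmp X v2 u2" using factors_throughE[OF g] .
  obtain K q1 q2 r1 r2 where bp: "biproduct X K1 K2 K q1 q2 r1 r2"
    using biproduct_exists K1 K2 S by blast
  obtain v where v: "v \<in> hom X K B" and vq1: "cmp X v q1 = v1" and vq2: "cmp X v q2 = v2"
    using biproduct_copairing[OF bp v1 v2] by blast
  have qu1: "cmp X q1 u1 \<in> hom X A K" and qu2: "cmp X q2 u2 \<in> hom X A K"
    using cmp_hom u1 u2 biproductD[OF bp] by blast+
  have "cmp X v (madd X (cmp X q1 u1) (cmp X q2 u2))
      = madd X (cmp X v (cmp X q1 u1)) (cmp X v (cmp X q2 u2))"
    using cmp_madd_left[OF qu1 qu2 v] .
  also have "\<dots> = madd X f g"
    using cmp_assoc[OF u1 _ v] cmp_assoc[OF u2 _ v] biproductD[OF bp] vq1 vq2 f_eq g_eq by simp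
  moreover have "K \<in> S" using closed K1 K2 bp by blast
  ultimately show ?thesis using factors_throughI[OF _ madd_hom[OF qu1 qu2] v] by simp
qed

lemma is_ideal_factors_through:
  assumes S: "S \<subseteq> objs X" and Z: "Z \<in> S" "is_zero_object X Z"
    and closed: "\<forall>K1\<in>S. \<forall>K2\<in>S. \<forall>P q1 q2 r1 r2. biproduct X K1 K2 P q1 q2 r1 r2 \<longrightarrow> P \<in> S"
  shows "is_ideal X (factors_through X S)"
proof -
  have "mzero X A B \<in> factors_through X S" if A: "A \<in> objs X" and B: "B \<in> objs X" for A B
  proof -
    have oZ: "Z \<in> objs X" using S Z by blast
    have "cmp X (mzero X Z B) (mzero X A Z) = mzero X A B"
      using cmp_mzero_left[OF mzero_hom[OF A oZ] B] .
    then show ?thesis using factors_throughI[OF Z(1) mzero_hom[OF A oZ] mzero_hom[OF oZ B]] by simp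
  qed
  moreover have "madd X f g \<in> factors_through X S"
    if f: "f \<in> factors_through X S" and g: "g \<in> factors_through X S"
      and "dom_of X f = dom_of X g" "cod_of X f = cod_of X g" for f g
  proof -
    have "f \<in> mors X" "g \<in> mors X" using f g unfolding factors_through_def by auto
    then have "f \<in> hom X (dom_of X f) (cod_of X f)" "g \<in> hom X (dom_of X f) (cod_of X f)"
      using mor_in_hom that(3,4) by metis+
    then show ?thesis using madd_in_factors_through[OF S closed f _ g] by blast
  qed
  moreover have "cmp X g (cmp X f h) \<in> factors_through X S"
    if f: "f \<in> factors_through X S" and g: "g \<in> mors X" and h: "h \<in> mors X"
      and "cod_of X h = dom_of X f" "cod_of X f = dom_of X g" for f g h
  proof -
    have fh: "f \<in> hom X (dom_of X f) (cod_of X f)" using f mor_in_hom unfolding factors_through_def by blast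
    obtain K u v where "K \<in> S" and u: "u \<in> hom X (dom_of X f) K" and v: "v \<in> hom X K (cod_of X f)"
      and f_eq: "f = cmp X v u" using factors_throughE[OF f fh] .
    have hh: "h \<in> hom X (dom_of X h) (dom_of X f)" and gh: "g \<in> hom X (cod_of X f) (cod_of X g)"
      using mor_in_hom g h that by metis+
    have "cmp X g (cmp X f h) = cmp X (cmp X g v) (cmp X u h)"
      using f_eq cmp_assoc[OF hh u v] cmp_assoc[OF cmp_hom[OF hh u] v gh] by simp
    then show ?thesis using factors_throughI[OF \<open>K \<in> S\<close> cmp_hom[OF hh u] cmp_hom[OF v gh]] by simp
  qed
  moreover have "factors_through X S \<subseteq> mors X" unfolding factors_through_def by blast
  ultimately show ?thesis unfolding is_ideal_def by blast
qed

lemma object_ideal_subset_factors_through: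
  assumes K: "is_ideal X K" and obj: "object_ideal X K"
  shows "K \<subseteq> factors_through X (ObK X K)"
proof -
  obtain Z where Z: "is_zero_object X Z" using zero_object_exists by blast
  have "ObK X K \<subseteq> objs X" unfolding ObK_def by blast
  moreover have "\<forall>K1\<in>ObK X K. \<forall>K2\<in>ObK X K. \<forall>P q1 q2 r1 r2.
      biproduct X K1 K2 P q1 q2 r1 r2 \<longrightarrow> P \<in> ObK X K"
    using biproduct_in_ObK[OF K] by blast
  ultimately have ideal: "is_ideal X (factors_through X (ObK X K))"
    using is_ideal_factors_through zero_object_in_ObK[OF K Z] Z by blast
  have "ide X Z' \<in> factors_through X (ObK X K)" if "Z' \<in> ObK X K" for Z'
  proof -
    have "Z' \<in> objs X" using that unfolding ObK_def by blast
    then show ?thesis using factors_throughI[OF that ide_hom ide_hom] cmp_ide_left[OF ide_hom] by simp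
  qed
  then have "gen_ideal X (ide X ` ObK X K) \<subseteq> factors_through X (ObK X K)"
    using gen_ideal_least[OF ideal] by blast
  then show ?thesis using obj unfolding object_ideal_def obj_gen_ideal_def by simp
qed

end

locale extriangulated_ideal = extriangulated_category +
  fixes I :: "'m set"
  assumes ideal: "is_ideal X I"
begin

lemma ideal_hom: "m \<in> I \<Longrightarrow> m \<in> hom X (dom_of X m) (cod_of X m)"
  using ideal mor_in_hom unfolding is_ideal_def by blast

subsection \<open>The ideal \<open>I\<^sup>\<perp>\<close>\<close>

lemma perpE_hom: "g \<in> perpE X I \<Longrightarrow> g \<in> hom X (dom_of X g) (cod_of X g)"
  using mor_in_hom unfolding perpE_def by blast

lemma perpE_homD:
  assumes "g \<in> perpE X I" "g \<in> hom X A Y" "m \<in> I" "m \<in> hom X X' C" "d \<in> Ext X C A"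
  shows "pull X Y m (push X C g d) = ezero X X' Y"
  using assms homD unfolding perpE_def by blast

lemma perpE_homI:
  assumes g: "g \<in> hom X A Y"
    and kill: "\<And>m X' C d. m \<in> I \<Longrightarrow> m \<in> hom X X' C \<Longrightarrow> d \<in> Ext X C A \<Longrightarrow>
        pull X Y m (push X C g d) = ezero X X' Y"
  shows "g \<in> perpE X I"
  using homD[OF g] kill ideal_hom unfolding perpE_def by blast

lemma mzero_in_perpE:
  assumes A: "A \<in> objs X" and B: "B \<in> objs X"
  shows "mzero X A B \<in> perpE X I"
proof (rule perpE_homI[OF mzero_hom[OF A B]])
  fix m X' C d assume "m \<in> I" and m: "m \<in> hom X X' C" and d: "d \<in> Ext X C A"
  have C: "C \<in> objs X" using hom_objs[OF m] by blast
  show "pull X B m (push X C (mzero X A B) d) = ezero X X' B"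
    using push_mzero[OF A B C d] pull_ezero[OF m B] by simp
qed

lemma madd_in_perpE:
  assumes f: "f \<in> perpE X I" "f \<in> hom X A B" and g: "g \<in> perpE X I" "g \<in> hom X A B"
  shows "madd X f g \<in> perpE X I"
proof (rule perpE_homI[OF madd_hom[OF f(2) g(2)]])
  fix m X' C d assume mI: "m \<in> I" and m: "m \<in> hom X X' C" and d: "d \<in> Ext X C A"
  have C: "C \<in> objs X" and B: "B \<in> objs X" and X': "X' \<in> objs X"
    using hom_objs[OF m] hom_objs[OF f(2)] by auto
  have "pull X B m (push X C (madd X f g) d)
      = eadd X X' B (pull X B m (push X C f d)) (pull X B m (push X C g d))"
    using push_madd[OF f(2) g(2) C d] pull_eadd[OF m B] push_Ext f(2) g(2) C d by simp
  also have "\<dots> = ezero X X' B"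
    using perpE_homD[OF f mI m d] perpE_homD[OF g mI m d] eadd_ezero[OF X' B ezero_Ext[OF X' B]]
    by simp
  finally show "pull X B m (push X C (madd X f g) d) = ezero X X' B" .
qed

lemma cmp_in_perpE:
  assumes f: "f \<in> perpE X I" "f \<in> hom X A B" and h: "h \<in> hom X A' A" and g: "g \<in> hom X B B'"
  shows "cmp X g (cmp X f h) \<in> perpE X I"
proof (rule perpE_homI[OF cmp_hom[OF cmp_hom[OF h f(2)] g]])
  fix m X' C d assume mI: "m \<in> I" and m: "m \<in> hom X X' C" and d: "d \<in> Ext X C A'"
  have C: "C \<in> objs X" and X': "X' \<in> objs X" using hom_objs[OF m] by auto
  have hd: "push X C h d \<in> Ext X C A" using push_Ext[OF h C d] .
  have "pull X B' m (push X C (cmp X g (cmp X f h)) d) = pull X B' m (push X C g (push X C f (push X C h d)))"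
    using push_cmp[OF cmp_hom[OF h f(2)] g C d] push_cmp[OF h f(2) C d] by simp
  also have "\<dots> = push X X' g (pull X B m (push X C f (push X C h d)))"
    using pull_push[OF g m push_Ext[OF f(2) C hd]] .
  also have "\<dots> = ezero X X' B'" using perpE_homD[OF f mI m hd] push_ezero[OF g X'] by simp
  finally show "pull X B' m (push X C (cmp X g (cmp X f h)) d) = ezero X X' B'" .
qed

lemma perpE_ideal: "is_ideal X (perpE X I)"
  unfolding is_ideal_def
proof (intro conjI ballI impI)
  show "perpE X I \<subseteq> mors X" unfolding perpE_def by blast
next
  fix A B assume "A \<in> objs X" "B \<in> objs X"
  then show "mzero X A B \<in> perpE X I" by (rule mzero_in_perpE)
next
  fix f g assume f: "f \<in> perpE X I" and g: "g \<in> perpE X I"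
    and "dom_of X f = dom_of X g" "cod_of X f = cod_of X g"
  then have "g \<in> hom X (dom_of X f) (cod_of X f)" using perpE_hom[OF g] by simp
  then show "madd X f g \<in> perpE X I" using madd_in_perpE[OF f perpE_hom[OF f] g] by blast
next
  fix f g h assume f: "f \<in> perpE X I" and "g \<in> mors X" "h \<in> mors X"
    and "cod_of X h = dom_of X f" "cod_of X f = dom_of X g"
  then have "h \<in> hom X (dom_of X h) (dom_of X f)" "g \<in> hom X (cod_of X f) (cod_of X g)"
    using mor_in_hom by metis+
  then show "cmp X g (cmp X f h) \<in> perpE X I" using cmp_in_perpE[OF f perpE_hom[OF f]] by blast
qed

subsection \<open>The two inclusions\<close>

lemma ide_in_perpE_of_etri_injective:
  assumes A: "ide X A \<in> perpE X I" and inj: "injective_obj X E" and t: "etri X A Z E x y \<eta>"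
  shows "ide X Z \<in> perpE X I"
proof (rule perpE_homI)
  have oA: "A \<in> objs X" and Z: "Z \<in> objs X" and x: "x \<in> hom X A Z" and y: "y \<in> hom X Z E"
    using etriD[OF t] by auto
  show "ide X Z \<in> hom X Z Z" using ide_hom[OF Z] .
  fix m X' C \<delta> assume mI: "m \<in> I" and m: "m \<in> hom X X' C" and \<delta>: "\<delta> \<in> Ext X C Z"
  have C: "C \<in> objs X" and X': "X' \<in> objs X" using hom_objs[OF m] by auto
  have "push X C y \<delta> = ezero X C E" using inj push_Ext[OF y C \<delta>] C unfolding injective_obj_def by blast
  then obtain \<delta>' where \<delta>': "\<delta>' \<in> Ext X C A" and \<delta>_eq: "\<delta> = push X C x \<delta>'"
    using push_exact_at_middle[OF t C \<delta>] by blast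
  have "pull X A m \<delta>' = ezero X X' A"
    using perpE_homD[OF A ide_hom[OF oA] mI m \<delta>'] push_ide[OF C oA \<delta>'] by simp
  then have "pull X Z m \<delta> = ezero X X' Z"
    using \<delta>_eq pull_push[OF x m \<delta>'] push_ezero[OF x X'] by simp
  then show "pull X Z m (push X C (ide X Z) \<delta>) = ezero X X' Z" using push_ide[OF C Z \<delta>] by simp
qed

lemma obj_gen_ideal_diamond_subset_perpE:
  assumes J: "J \<subseteq> perpE X I"
  shows "obj_gen_ideal X (diamond X (ObK X J) (ObK X (E_inj X))) \<subseteq> perpE X I"
  unfolding obj_gen_ideal_def
proof (rule gen_ideal_least[OF perpE_ideal], rule subsetI)
  fix f assume "f \<in> ide X ` diamond X (ObK X J) (ObK X (E_inj X))"
  then obtain Z A E x y \<eta> where "f = ide X Z" "A \<in> ObK X J" "E \<in> ObK X (E_inj X)"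
      "etri X A Z E x y \<eta>"
    unfolding diamond_def by blast
  then show "f \<in> perpE X I"
    using ide_in_perpE_of_etri_injective J injective_obj_iff_ObK_E_inj unfolding ObK_def by blast
qed

text \<open>The octahedron of the split triangle \<open>A \<rightarrow> A\<^sub>0 \<oplus> A \<rightarrow> A\<^sub>0\<close> with \<open>A\<^sub>0 \<oplus> A \<rightarrow> M \<rightarrow> C\<close>
  makes \<open>A \<rightarrow> M\<close> an inflation whose extension is \<open>eu\<^sup>\<star>\<eta>\<close>, where \<open>eu\<close> factors through \<open>i\<close> by
  comparison with the triangle of \<open>i\<close>; hence \<open>g\<^sub>\<star>\<close> kills it.\<close>

lemma perpE_extends_to_middle_term:
  assumes bp: "biproduct X A0 A P i1 i2 p1 p2" and t: "etri X P M C h v d2"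
    and t0: "etri X A0 X0 C a i (push X C p1 d2)" and iI: "i \<in> I"
    and g: "g \<in> perpE X I" "g \<in> hom X A Y"
  shows "\<exists>l\<in>hom X M Y. cmp X l (cmp X h i2) = g"
proof -
  have A0: "A0 \<in> objs X" and A: "A \<in> objs X" and i2: "i2 \<in> hom X A P" and p1: "p1 \<in> hom X P A0"
    and p2: "p2 \<in> hom X P A" and p2i2: "cmp X p2 i2 = ide X A"
    using biproductD[OF bp] hom_objs by blast+
  have C: "C \<in> objs X" and d2: "d2 \<in> Ext X C P" and i: "i \<in> hom X X0 C"
    using etriD[OF t] etriD[OF t0] by auto
  have Y: "Y \<in> objs X" and \<eta>: "push X C p2 d2 \<in> Ext X C A" using hom_objs[OF g(2)] push_Ext[OF p2 C d2] by auto
  obtain Eu dd eu h' d3 where eu: "eu \<in> hom X Eu C" and t3: "etri X A M Eu (cmp X h i2) h' d3"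
      and t4: "etri X A0 Eu C dd eu (push X C p1 d2)" and d3: "push X Eu i2 d3 = pull X P eu d2"
    using ET4E[OF etri_split[OF biproduct_swap[OF bp]] t] by metis
  have Eu: "Eu \<in> objs X" and d3E: "d3 \<in> Ext X Eu A" using etriD[OF t3] by auto
  have "d3 = push X Eu (cmp X p2 i2) d3" using p2i2 push_ide[OF Eu A d3E] by simp
  also have "\<dots> = pull X A eu (push X C p2 d2)"
    using push_cmp[OF i2 p2 Eu d3E] d3 pull_push[OF p2 eu d2] by simp
  finally have d3_eq: "d3 = pull X A eu (push X C p2 d2)" .
  have "push X C (ide X A0) (push X C p1 d2) = pull X A0 (ide X C) (push X C p1 d2)"
    using push_ide pull_ide C A0 push_Ext[OF p1 C d2] by simp
  then obtain \<beta> where \<beta>: "\<beta> \<in> hom X Eu X0" and "cmp X (ide X C) eu = cmp X i \<beta>"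
    using etri_morphism[OF t4 t0 ide_hom[OF A0] ide_hom[OF C]] by blast
  then have eu_eq: "eu = cmp X i \<beta>" using cmp_ide_left[OF eu] by simp
  have gE: "push X C g (push X C p2 d2) \<in> Ext X C Y" using push_Ext[OF g(2) C \<eta>] .
  have "push X Eu g d3 = pull X Y eu (push X C g (push X C p2 d2))"
    using d3_eq pull_push[OF g(2) eu \<eta>] by simp
  also have "\<dots> = pull X Y \<beta> (pull X Y i (push X C g (push X C p2 d2)))"
    using eu_eq pull_cmp[OF i \<beta> Y gE] by simp
  also have "\<dots> = ezero X Eu Y" using perpE_homD[OF g iI i \<eta>] pull_ezero[OF \<beta> Y] by simp
  finally show ?thesis using extend_along_inflation[OF t3 g(2)] by blast
qed

lemma perpE_subset_obj_gen_ideal_diamond: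
  assumes EI: "enough_injectives X" and JW: "J_witness X I J"
  shows "perpE X I \<subseteq> obj_gen_ideal X (diamond X (ObK X J) (ObK X (E_inj X)))"
proof
  fix g assume gP: "g \<in> perpE X I"
  define A Y where "A = dom_of X g" and "Y = cod_of X g"
  have g: "g \<in> hom X A Y" using perpE_hom[OF gP] unfolding A_def Y_def .
  have oA: "A \<in> objs X" using hom_objs[OF g] by blast
  obtain E C x y \<eta> where inj: "injective_obj X E" and t1: "etri X A E C x y \<eta>"
    using EI oA unfolding enough_injectives_def by blast
  have C: "C \<in> objs X" and \<eta>: "\<eta> \<in> Ext X C A" using etriD[OF t1] by auto
  obtain i A0 a d where "is_precover X I C i" and t0: "etri X A0 (dom_of X i) C a i d"
    and A0J: "A0 \<in> ObK X J"
    using JW C unfolding J_witness_def by blast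
  then have iI: "i \<in> I" unfolding is_precover_def by blast
  have A0: "A0 \<in> objs X" and d: "d \<in> Ext X C A0" using etriD[OF t0] by auto
  obtain P i1 i2 p1 p2 where bp: "biproduct X A0 A P i1 i2 p1 p2"
    using biproduct_exists[OF A0 oA] by blast
  obtain d2 where d2: "d2 \<in> Ext X C P" and p1d2: "push X C p1 d2 = d" and p2d2: "push X C p2 d2 = \<eta>"
    using Ext_biproduct_exists[OF bp C d \<eta>] by blast
  obtain M h v where t: "etri X P M C h v d2"
    using etri_exists[OF C _ d2] biproductD[OF bp] by blast
  obtain l where l: "l \<in> hom X M Y" and g_eq: "cmp X l (cmp X h i2) = g"
    using perpE_extends_to_middle_term[OF bp t _ iI gP g] t0 p1d2 by blast
  obtain E2 x' y' d' where "injective_obj X E2" "etri X A0 M E2 x' y' d'"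
    using middle_term_in_diamond[OF bp t _ inj] t1 p2d2 by blast
  then have M: "M \<in> diamond X (ObK X J) (ObK X (E_inj X))"
    using A0J injective_obj_iff_ObK_E_inj unfolding diamond_def by blast
  have "cmp X h i2 \<in> hom X A M" using cmp_hom biproductD[OF bp] etriD[OF t] by blast
  then show "g \<in> obj_gen_ideal X (diamond X (ObK X J) (ObK X (E_inj X)))"
    using cmp_through_in_obj_gen_ideal[OF M _ l] g_eq by blast
qed

subsection \<open>Condition (J) when \<open>I\<^sup>\<perp>\<close> is an object ideal\<close>

lemma deflation_is_precover:
  assumes t: "etri X K B C x y d" and y: "y \<in> I"
    and kill: "\<And>i X'. i \<in> I \<Longrightarrow> i \<in> hom X X' C \<Longrightarrow> pull X K i d = ezero X X' K"
  shows "is_precover X I C y"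
  unfolding is_precover_def
proof (intro conjI ballI impI)
  have yh: "y \<in> hom X B C" using etriD[OF t] by blast
  show "y \<in> I" by (fact y)
  show "cod_of X y = C" using homD[OF yh] by blast
  fix i' assume i'I: "i' \<in> I" and "cod_of X i' = C"
  then have i': "i' \<in> hom X (dom_of X i') C" using ideal_hom by metis
  then show "\<exists>h\<in>hom X (dom_of X i') (dom_of X y). cmp X y h = i'"
    using lift_through_deflation[OF t i' kill[OF i'I i']] homD[OF yh] by simp
qed

lemma precover_from_factorization:
  assumes \<delta>: "\<delta> \<in> Ext X C A" and t': "etri X A' X0 C x' i \<delta>'" and iI: "i \<in> I"
    and j1P: "j1 \<in> perpE X I" and j1: "j1 \<in> hom X A K" and j2: "j2 \<in> hom X K A'"
    and j\<delta>: "push X C (cmp X j2 j1) \<delta> = \<delta>'"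
  shows "\<exists>B1 x1 y1. etri X K B1 C x1 y1 (push X C j1 \<delta>) \<and> is_precover X I C y1"
proof -
  have C: "C \<in> objs X" and K: "K \<in> objs X" and i: "i \<in> hom X X0 C" and A': "A' \<in> objs X"
    using etriD[OF t'] hom_objs[OF j1] by auto
  obtain B1 x1 y1 where t1: "etri X K B1 C x1 y1 (push X C j1 \<delta>)"
    using etri_exists[OF C K push_Ext[OF j1 C \<delta>]] by blast
  have "push X C j2 (push X C j1 \<delta>) = pull X A' (ide X C) \<delta>'"
    using push_cmp[OF j1 j2 C \<delta>] j\<delta> pull_ide[OF C A'] etriD[OF t'] by simp
  then obtain b where b: "b \<in> hom X B1 X0" and "cmp X (ide X C) y1 = cmp X i b"
    using etri_morphism[OF t1 t' j2 ide_hom[OF C]] by blast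
  then have "y1 = cmp X i b" using cmp_ide_left etriD[OF t1] by metis
  then have "y1 \<in> I" using ideal_cmp_right[OF ideal iI i b] by simp
  moreover have "pull X K i' (push X C j1 \<delta>) = ezero X X' K" if "i' \<in> I" "i' \<in> hom X X' C" for i' X'
    using perpE_homD[OF j1P j1 that \<delta>] .
  ultimately show ?thesis using t1 deflation_is_precover[OF t1] by blast
qed

lemma J_witness_perpE:
  assumes SP: "special_precovering X I" and OI: "object_ideal X (perpE X I)"
  shows "J_witness X I (perpE X I)"
proof -
  have "\<exists>i A x d. is_precover X I C i \<and> etri X A (dom_of X i) C x i d \<and> A \<in> ObK X (perpE X I)"
    if C: "C \<in> objs X" for C
  proof -
    obtain i where "is_special_precover X I C i" using SP C unfolding special_precovering_def by blast
    then obtain A B A' x y x' \<delta> \<delta>' j where t: "etri X A B C x y \<delta>"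
        and t': "etri X A' (dom_of X i) C x' i \<delta>'" and j: "j \<in> hom X A A'"
        and j\<delta>: "push X C j \<delta> = pull X A' (ide X C) \<delta>'" and jP: "j \<in> perpE X I" and iI: "i \<in> I"
      unfolding is_special_precover_def by blast
    have \<delta>: "\<delta> \<in> Ext X C A" and "\<delta>' \<in> Ext X C A'" and "A' \<in> objs X" using etriD[OF t] etriD[OF t'] by auto
    then have j\<delta>': "push X C j \<delta> = \<delta>'" using j\<delta> pull_ide[OF C] by simp
    obtain K j1 j2 where K: "K \<in> ObK X (perpE X I)" and j1: "j1 \<in> hom X A K"
        and j2: "j2 \<in> hom X K A'" and j_eq: "j = cmp X j2 j1"
      using factors_throughE[OF _ j] object_ideal_subset_factors_through[OF perpE_ideal OI] jP
      by blast
    have "K \<in> objs X" using K unfolding ObK_def by blast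
    then have "j1 \<in> perpE X I"
      using cmp_through_ObK_in_ideal[OF perpE_ideal K j1 ide_hom] cmp_ide_left[OF j1] by simp
    then obtain B1 x1 y1 where "etri X K B1 C x1 y1 (push X C j1 \<delta>)" "is_precover X I C y1"
      using precover_from_factorization[OF \<delta> t' iI _ j1 j2] j\<delta>' j_eq by blast
    moreover have "dom_of X y1 = B1" using etriD[OF calculation(1)] homD by blast
    ultimately show ?thesis using K by auto
  qed
  then show ?thesis using OI unfolding J_witness_def by blast
qed

end

theorem proposition5p3:
  fixes X :: "('o,'m,'e) extri_data" and I :: "'m set"
  assumes "extriangulated X"
    and "enough_injectives X"
    and "is_ideal X I"
    and "special_precovering X I"
  shows "(condition_J X I \<longleftrightarrow> object_ideal X (perpE X I)) \<and>
         (\<forall>J. J_witness X I J \<longrightarrow>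
            perpE X I = obj_gen_ideal X (diamond X (ObK X J) (ObK X (E_inj X))))"
proof -
  interpret extriangulated_ideal X I by unfold_locales (fact assms(1), fact assms(3))
  have eq: "perpE X I = obj_gen_ideal X (diamond X (ObK X J) (ObK X (E_inj X)))"
    if J: "J_witness X I J" for J
    using obj_gen_ideal_diamond_subset_perpE perpE_subset_obj_gen_ideal_diamond[OF assms(2) J] J
    unfolding J_witness_def by blast
  have "diamond X S T \<subseteq> objs X" for S T unfolding diamond_def etri_def by blast
  then have "condition_J X I \<Longrightarrow> object_ideal X (perpE X I)"
    using eq object_ideal_obj_gen_ideal unfolding condition_J_def by metis
  moreover have "object_ideal X (perpE X I) \<Longrightarrow> condition_J X I"
    using J_witness_perpE[OF assms(4)] unfolding condition_J_def by blast
  ultimately show ?thesis using eq by blast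
qed

end
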